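(* Let $n=n_1+\dots+n_k=p+q$ with positive integers, let $G=U(n)$, let $L=U(n_1)\times\cdots\times U(n_k)$ and $H=U(p)\times U(q)$ be the natural block-diagonal subgroups of $G$, and let $G'=O(n)$. If $\min(p,q)=2$ and $k\ge 4$, then $LG'H\subsetneq G$.
   Context: $LG'H=\{xyz:x\in L,y\in G',z\in H\}$. *)

theory Defs
  imports Complex_Main "Jordan_Normal_Form.Matrix"
begin

definition ctrans :: "complex mat \<Rightarrow> complex mat" where
  "ctrans A = mat (dim_col A) (dim_row A) (\<lambda>(i,j). cnj (A $$ (j,i)))"

definition unitary_group :: "nat \<Rightarrow> complex mat set" where
  "unitary_group n = {A \<in> carrier_mat n n. A * ctrans A = 1\<^sub>m n}"

definition orthogonal_group :: "nat \<Rightarrow> complex mat set" where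
  "orthogonal_group n = {A \<in> unitary_group n. \<forall>i<n. \<forall>j<n. A $$ (i,j) \<in> \<real>}"

definition same_block :: "nat list \<Rightarrow> nat \<Rightarrow> nat \<Rightarrow> bool" where
  "same_block ns i j = (\<exists>m<length ns.
      sum_list (take m ns) \<le> i \<and> i < sum_list (take (Suc m) ns) \<and>
      sum_list (take m ns) \<le> j \<and> j < sum_list (take (Suc m) ns))"

definition block_unitary_group :: "nat list \<Rightarrow> complex mat set" where
  "block_unitary_group ns = {A \<in> unitary_group (sum_list ns).
      \<forall>i<sum_list ns. \<forall>j<sum_list ns. \<not> same_block ns i j \<longrightarrow> A $$ (i,j) = 0}"

definition triple_prod :: "complex mat set \<Rightarrow> complex mat set \<Rightarrow> complex mat set \<Rightarrow> complex mat set" where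
  "triple_prod X Y Z = {x * y * z | x y z. x \<in> X \<and> y \<in> Y \<and> z \<in> Z}"

end

theory Submission
  imports Defs "Jordan_Normal_Form.Determinant"
begin

(* Fix the two columns J of the size-2 block of H and, for a unitary g and a block B of L,
   let G_B(g) = g_{B,J}^* g_{B,J}. Left multiplication by L leaves every G_B unchanged, and
   right multiplication by H conjugates all of them by the same 2x2 unitary, the J-block of
   the H-factor. For a real orthogonal matrix the G_B are real symmetric, so
   tr (G_0 G_1 G_2) = tr (G_0 G_2 G_1), and this identity therefore holds on all of L O(n) H.
   A 4x4 unitary whose rows are placed at the starts of four different blocks of L (the fourth
   block absorbs the row that would otherwise spoil the rank-one shape of G_0, G_1, G_2)
   violates it. *)

section \<open>Conjugate transpose and unitary matrices\<close>

lemma ctrans_carrier_mat [simp]: "A \<in> carrier_mat n m \<Longrightarrow> ctrans A \<in> carrier_mat m n"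
  unfolding ctrans_def by auto

lemma dim_ctrans [simp]: "dim_row (ctrans A) = dim_col A" "dim_col (ctrans A) = dim_row A"
  unfolding ctrans_def by auto

lemma index_ctrans [simp]:
  "i < dim_col A \<Longrightarrow> j < dim_row A \<Longrightarrow> ctrans A $$ (i, j) = cnj (A $$ (j, i))"
  unfolding ctrans_def by auto

lemma ctrans_one_mat [simp]: "ctrans (1\<^sub>m n) = 1\<^sub>m n"
  by (intro eq_matI) auto

lemma ctrans_mult:
  assumes "A \<in> carrier_mat n m" "B \<in> carrier_mat m k"
  shows "ctrans (A * B) = ctrans B * ctrans A"
  using assms
  by (intro eq_matI) (auto simp: scalar_prod_def cnj_sum mult.commute intro!: sum.cong)

lemma unitary_groupD:
  assumes "X \<in> unitary_group n"
  shows "X \<in> carrier_mat n n" "X * ctrans X = 1\<^sub>m n" "ctrans X * X = 1\<^sub>m n"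
proof -
  show X: "X \<in> carrier_mat n n" "X * ctrans X = 1\<^sub>m n"
    using assms unfolding unitary_group_def by auto
  show "ctrans X * X = 1\<^sub>m n"
    by (rule mat_mult_left_right_inverse[OF X(1) _ X(2)]) (use X in simp)
qed

lemma unitary_group_mult:
  assumes "X \<in> unitary_group n" "Y \<in> unitary_group n"
  shows "X * Y \<in> unitary_group n"
proof -
  note X = unitary_groupD[OF assms(1)] and Y = unitary_groupD[OF assms(2)]
  have "X * Y * ctrans (X * Y) = X * (Y * ctrans Y) * ctrans X"
    using X(1) Y(1)
    by (simp add: ctrans_mult assoc_mult_mat[of _ n n _ n _ n] mult_carrier_mat[of _ n n _ n])
  also have "\<dots> = 1\<^sub>m n"
    using X Y by simp
  finally show ?thesis
    using X(1) Y(1) unfolding unitary_group_def by auto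
qed

lemma unitary_groupI_rows:
  assumes "X \<in> carrier_mat n n"
    and "\<And>r r'. r < n \<Longrightarrow> r' < n \<Longrightarrow>
           (\<Sum>c<n. X $$ (r, c) * cnj (X $$ (r', c))) = (if r = r' then 1 else 0)"
  shows "X \<in> unitary_group n"
  unfolding unitary_group_def
  using assms by (auto intro!: eq_matI simp: scalar_prod_def lessThan_atLeast0)

section \<open>Traces\<close>

definition mat_trace :: "'a :: comm_ring mat \<Rightarrow> 'a" where
  "mat_trace A = (\<Sum>i<dim_row A. A $$ (i, i))"

lemma mat_trace_mult_comm:
  fixes A B :: "'a :: comm_ring mat"
  assumes "A \<in> carrier_mat n m" "B \<in> carrier_mat m n"
  shows "mat_trace (A * B) = mat_trace (B * A)"
proof -
  have "mat_trace (A * B) = (\<Sum>i<n. \<Sum>j<m. A $$ (i, j) * B $$ (j, i))"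
    using assms by (simp add: mat_trace_def scalar_prod_def lessThan_atLeast0)
  also have "\<dots> = (\<Sum>j<m. \<Sum>i<n. B $$ (j, i) * A $$ (i, j))"
    by (subst sum.swap) (simp add: mult.commute)
  also have "\<dots> = mat_trace (B * A)"
    using assms by (simp add: mat_trace_def scalar_prod_def lessThan_atLeast0)
  finally show ?thesis .
qed

lemma mat_trace_transpose: "A \<in> carrier_mat n n \<Longrightarrow> mat_trace (transpose_mat A) = mat_trace A"
  by (simp add: mat_trace_def)

lemma mat_trace_mult_symmetric_swap:
  fixes A B C :: "'a :: comm_ring mat"
  assumes carrier: "A \<in> carrier_mat n n" "B \<in> carrier_mat n n" "C \<in> carrier_mat n n"
    and symmetric: "transpose_mat A = A" "transpose_mat B = B" "transpose_mat C = C"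
  shows "mat_trace (A * B * C) = mat_trace (A * C * B)"
proof -
  have "mat_trace (A * B * C) = mat_trace (transpose_mat (A * B * C))"
    using carrier by (simp add: mat_trace_transpose[of _ n])
  also have "transpose_mat (A * B * C) = C * (B * A)"
    using carrier symmetric
    by (simp add: transpose_mult[of _ n n _ n] mult_carrier_mat[of _ n n _ n])
  also have "\<dots> = C * B * A"
    using carrier by (simp add: assoc_mult_mat[of _ n n _ n _ n])
  also have "mat_trace \<dots> = mat_trace (A * (C * B))"
    using carrier by (intro mat_trace_mult_comm[of _ n n]) (auto intro: mult_carrier_mat)
  also have "A * (C * B) = A * C * B"
    using carrier by (simp add: assoc_mult_mat[of _ n n _ n _ n])
  finally show ?thesis .
qed

lemma mult_conj_mat:
  fixes X Y P A :: "'a :: comm_ring_1 mat"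
  assumes carrier: "X \<in> carrier_mat n n" "Y \<in> carrier_mat n n"
      "P \<in> carrier_mat n n" "A \<in> carrier_mat n n"
    and inverse: "A * P = 1\<^sub>m n"
  shows "P * X * A * (P * Y * A) = P * (X * Y) * A"
proof -
  have "P * X * A * (P * Y * A) = P * X * (A * P) * Y * A"
    using carrier by (simp add: assoc_mult_mat[of _ n n _ n _ n] mult_carrier_mat[of _ n n _ n])
  then show ?thesis
    using carrier inverse
    by (simp add: assoc_mult_mat[of _ n n _ n _ n] mult_carrier_mat[of _ n n _ n])
qed

lemma mat_trace_conj:
  fixes M P A :: "'a :: comm_ring_1 mat"
  assumes carrier: "M \<in> carrier_mat n n" "P \<in> carrier_mat n n" "A \<in> carrier_mat n n"
    and inverse: "A * P = 1\<^sub>m n"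
  shows "mat_trace (P * M * A) = mat_trace M"
proof -
  have "mat_trace (P * M * A) = mat_trace (A * (P * M))"
    using carrier by (intro mat_trace_mult_comm[of _ n n]) (auto intro: mult_carrier_mat)
  also have "A * (P * M) = M"
    using carrier inverse by (simp add: assoc_mult_mat[of _ n n _ n _ n, symmetric])
  finally show ?thesis .
qed

lemma mat_trace_conj_triple:
  fixes X Y Z P A :: "'a :: comm_ring_1 mat"
  assumes carrier: "X \<in> carrier_mat n n" "Y \<in> carrier_mat n n" "Z \<in> carrier_mat n n"
      "P \<in> carrier_mat n n" "A \<in> carrier_mat n n"
    and inverse: "A * P = 1\<^sub>m n"
  shows "mat_trace (P * X * A * (P * Y * A) * (P * Z * A)) = mat_trace (X * Y * Z)"
proof -
  have XY: "X * Y \<in> carrier_mat n n"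
    using carrier by (intro mult_carrier_mat)
  have "P * X * A * (P * Y * A) * (P * Z * A) = P * (X * Y * Z) * A"
    unfolding mult_conj_mat[OF carrier(1,2,4,5) inverse] mult_conj_mat[OF XY carrier(3-5) inverse]
    ..
  also have "mat_trace \<dots> = mat_trace (X * Y * Z)"
    by (rule mat_trace_conj[OF mult_carrier_mat[OF XY carrier(3)] carrier(4,5) inverse])
  finally show ?thesis .
qed

section \<open>Consecutive blocks\<close>

definition block_start :: "nat list \<Rightarrow> nat \<Rightarrow> nat" where
  "block_start ns m = sum_list (take m ns)"

definition block :: "nat list \<Rightarrow> nat \<Rightarrow> nat set" where
  "block ns m = {block_start ns m..<block_start ns (Suc m)}"

lemma block_start_mono: "m \<le> m' \<Longrightarrow> block_start ns m \<le> block_start ns m'"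
  by (metis block_start_def le_Suc_ex le_add1 sum_list_append take_add)

lemma block_start_Suc: "m < length ns \<Longrightarrow> block_start ns (Suc m) = block_start ns m + ns ! m"
  unfolding block_start_def by (simp add: take_Suc_conv_app_nth)

lemma block_start_le_sum_list: "block_start ns m \<le> sum_list ns"
  unfolding block_start_def by (metis append_take_drop_id le_add1 sum_list_append)

lemma block_unique: "i \<in> block ns m \<Longrightarrow> i \<in> block ns m' \<Longrightarrow> m = m'"
  unfolding block_def
  by (metis atLeastLessThan_iff Suc_leI leD block_start_mono nat_neq_iff order.strict_trans2)

lemma block_subset: "block ns m \<subseteq> {..<sum_list ns}"
  using block_start_le_sum_list[of ns "Suc m"] unfolding block_def by auto

lemma block_start_add_le_sum_list: "m < length ns \<Longrightarrow> block_start ns m + ns ! m \<le> sum_list ns"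
  using block_start_le_sum_list[of ns "Suc m"] by (simp add: block_start_Suc)

lemma block_eq_atLeastLessThan:
  "m < length ns \<Longrightarrow> block ns m = {block_start ns m..<block_start ns m + ns ! m}"
  unfolding block_def by (simp add: block_start_Suc)

lemma block_start_in_block:
  "m < length ns \<Longrightarrow> ns ! m > 0 \<Longrightarrow> block_start ns m \<in> block ns m"
  unfolding block_def by (simp add: block_start_Suc)

lemma same_block_iff_block:
  "same_block ns i j \<longleftrightarrow> (\<exists>m<length ns. i \<in> block ns m \<and> j \<in> block ns m)"
  unfolding same_block_def block_def block_start_def by auto

lemma block_unitary_group_subset: "block_unitary_group ns \<subseteq> unitary_group (sum_list ns)"
  unfolding block_unitary_group_def by auto

lemma block_unitary_group_off_block:
  assumes "X \<in> block_unitary_group ns" "i < sum_list ns" "j < sum_list ns"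
    and "i \<in> block ns m" "j \<notin> block ns m"
  shows "X $$ (i, j) = 0" "X $$ (j, i) = 0"
proof -
  have "\<not> same_block ns i j" "\<not> same_block ns j i"
    using assms(4,5) block_unique unfolding same_block_iff_block by blast+
  then show "X $$ (i, j) = 0" "X $$ (j, i) = 0"
    using assms(1-3) unfolding block_unitary_group_def by auto
qed

section \<open>Gram matrices of column slices\<close>

(* col_slice X R j0 d is X_{R,J} for J = {j0..<j0 + d}, padded with zero rows outside R, so that
   col_gram X R j0 d = X_{R,J}^* X_{R,J}. *)
definition col_slice :: "complex mat \<Rightarrow> nat set \<Rightarrow> nat \<Rightarrow> nat \<Rightarrow> complex mat" where
  "col_slice X R j0 d = mat (dim_row X) d (\<lambda>(r, t). if r \<in> R then X $$ (r, j0 + t) else 0)"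

definition col_gram :: "complex mat \<Rightarrow> nat set \<Rightarrow> nat \<Rightarrow> nat \<Rightarrow> complex mat" where
  "col_gram X R j0 d = ctrans (col_slice X R j0 d) * col_slice X R j0 d"

definition diag_block :: "'a mat \<Rightarrow> nat \<Rightarrow> nat \<Rightarrow> 'a mat" where
  "diag_block h j0 d = mat d d (\<lambda>(s, t). h $$ (j0 + s, j0 + t))"

lemma col_slice_carrier_mat [simp]: "col_slice X R j0 d \<in> carrier_mat (dim_row X) d"
  unfolding col_slice_def by simp

lemma col_gram_carrier_mat [simp]: "col_gram X R j0 d \<in> carrier_mat d d"
  unfolding col_gram_def by (simp add: mult_carrier_mat[of _ d "dim_row X"])

lemma dim_col_gram [simp]: "dim_row (col_gram X R j0 d) = d" "dim_col (col_gram X R j0 d) = d"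
  using col_gram_carrier_mat by blast+

lemma diag_block_carrier_mat [simp]: "diag_block h j0 d \<in> carrier_mat d d"
  unfolding diag_block_def by simp

lemma dim_diag_block [simp]: "dim_row (diag_block h j0 d) = d" "dim_col (diag_block h j0 d) = d"
  unfolding diag_block_def by simp_all

lemma index_col_gram:
  assumes "s < d" "t < d"
  shows "col_gram X R j0 d $$ (s, t) =
    (\<Sum>r<dim_row X. if r \<in> R then cnj (X $$ (r, j0 + s)) * X $$ (r, j0 + t) else 0)"
  using assms unfolding col_gram_def col_slice_def
  by (auto simp: scalar_prod_def lessThan_atLeast0 intro!: sum.cong)

lemma col_slice_mult_left:
  assumes "l \<in> carrier_mat N N" "X \<in> carrier_mat N N" "j0 + d \<le> N"
    and off_block: "\<And>i j. i < N \<Longrightarrow> j < N \<Longrightarrow> i \<in> R \<Longrightarrow> j \<notin> R \<Longrightarrow> l $$ (i, j) = 0 \<and> l $$ (j, i) = 0"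
  shows "col_slice (l * X) R j0 d = l * col_slice X R j0 d"
proof (rule eq_matI)
  fix r t assume r: "r < dim_row (l * col_slice X R j0 d)"
    and t: "t < dim_col (l * col_slice X R j0 d)"
  have "l $$ (r, c) * (if c \<in> R then X $$ (c, j0 + t) else 0)
      = (if r \<in> R then l $$ (r, c) * X $$ (c, j0 + t) else 0)" if "c < N" for c
    using off_block[of r c] off_block[of c r] r that assms(1) by auto
  then show "col_slice (l * X) R j0 d $$ (r, t) = (l * col_slice X R j0 d) $$ (r, t)"
    using assms r t by (auto simp: col_slice_def scalar_prod_def lessThan_atLeast0 intro: sum.cong)
qed (use assms in \<open>auto simp: col_slice_def\<close>)

lemma col_gram_mult_left:
  assumes "l \<in> unitary_group N" "X \<in> carrier_mat N N" "j0 + d \<le> N"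
    and "\<And>i j. i < N \<Longrightarrow> j < N \<Longrightarrow> i \<in> R \<Longrightarrow> j \<notin> R \<Longrightarrow> l $$ (i, j) = 0 \<and> l $$ (j, i) = 0"
  shows "col_gram (l * X) R j0 d = col_gram X R j0 d"
proof -
  note l = unitary_groupD[OF assms(1)]
  define S where "S = col_slice X R j0 d"
  have S: "S \<in> carrier_mat N d"
    using assms(2) unfolding S_def by auto
  have "col_slice (l * X) R j0 d = l * S"
    unfolding S_def by (rule col_slice_mult_left[OF l(1) assms(2-4)])
  then have "col_gram (l * X) R j0 d = ctrans S * ctrans l * (l * S)"
    unfolding col_gram_def using l(1) S by (simp add: ctrans_mult)
  also have "\<dots> = ctrans S * (ctrans l * l) * S"
    using l(1) S
    by (simp add: assoc_mult_mat[of "ctrans S" d N _ N S d] assoc_mult_mat[of "ctrans l" N N l N S d]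
        assoc_mult_mat[of "ctrans S" d N "ctrans l" N "l * S" d] mult_carrier_mat[of _ N N _ N]
        mult_carrier_mat[of _ N N _ d])
  also have "\<dots> = col_gram X R j0 d"
    using S unfolding col_gram_def S_def l(3) by simp
  finally show ?thesis .
qed

lemma col_slice_mult_right:
  assumes "Y \<in> carrier_mat N N" "h \<in> carrier_mat N N" "j0 + d \<le> N"
    and off_block: "\<And>c t. c < N \<Longrightarrow> t < d \<Longrightarrow> c \<notin> {j0..<j0 + d} \<Longrightarrow> h $$ (c, j0 + t) = 0"
  shows "col_slice (Y * h) R j0 d = col_slice Y R j0 d * diag_block h j0 d"
proof (rule eq_matI)
  fix r t assume r: "r < dim_row (col_slice Y R j0 d * diag_block h j0 d)"
    and t: "t < dim_col (col_slice Y R j0 d * diag_block h j0 d)"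
  have t: "t < d"
    using t by simp
  have "(\<Sum>c<N. Y $$ (r, c) * h $$ (c, j0 + t)) = (\<Sum>c\<in>{j0..<j0 + d}. Y $$ (r, c) * h $$ (c, j0 + t))"
    using assms(3) off_block t by (intro sum.mono_neutral_right) auto
  also have "\<dots> = (\<Sum>s<d. Y $$ (r, j0 + s) * h $$ (j0 + s, j0 + t))"
    using sum.shift_bounds_nat_ivl[of "\<lambda>c. Y $$ (r, c) * h $$ (c, j0 + t)" 0 j0 d]
    by (simp add: add.commute lessThan_atLeast0)
  finally show "col_slice (Y * h) R j0 d $$ (r, t)
      = (col_slice Y R j0 d * diag_block h j0 d) $$ (r, t)"
    using assms r t
    by (auto simp: col_slice_def diag_block_def scalar_prod_def lessThan_atLeast0 intro: sum.cong)
qed (use assms in \<open>auto simp: col_slice_def\<close>)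

lemma col_gram_mult_right:
  assumes "Y \<in> carrier_mat N N" "h \<in> carrier_mat N N" "j0 + d \<le> N"
    and "\<And>c t. c < N \<Longrightarrow> t < d \<Longrightarrow> c \<notin> {j0..<j0 + d} \<Longrightarrow> h $$ (c, j0 + t) = 0"
  shows "col_gram (Y * h) R j0 d
           = ctrans (diag_block h j0 d) * col_gram Y R j0 d * diag_block h j0 d"
proof -
  define S where "S = col_slice Y R j0 d"
  define A where "A = diag_block h j0 d"
  have S: "S \<in> carrier_mat N d" and A: "A \<in> carrier_mat d d"
    using assms(1) unfolding S_def A_def by auto
  have "col_slice (Y * h) R j0 d = S * A"
    unfolding S_def A_def by (rule col_slice_mult_right[OF assms])
  then have "col_gram (Y * h) R j0 d = ctrans A * ctrans S * (S * A)"
    unfolding col_gram_def using S A by (simp add: ctrans_mult)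
  also have "\<dots> = ctrans A * (ctrans S * S) * A"
    using S A by (simp add: assoc_mult_mat[of _ d d _ N _ d] assoc_mult_mat[of _ d N _ d _ d]
        assoc_mult_mat[of _ d d _ d _ d] mult_carrier_mat[of _ d N _ d])
  finally show ?thesis
    unfolding col_gram_def S_def A_def .
qed

lemma col_gram_unitary:
  assumes "X \<in> unitary_group N" "j0 + d \<le> N"
  shows "col_gram X UNIV j0 d = 1\<^sub>m d"
proof (rule eq_matI)
  note X = unitary_groupD[OF assms(1)]
  fix s t assume "s < dim_row (1\<^sub>m d)" "t < dim_col (1\<^sub>m d)"
  then have st: "s < d" "t < d" by auto
  have "col_gram X UNIV j0 d $$ (s, t) = (ctrans X * X) $$ (j0 + s, j0 + t)"
    using st assms(2) X(1) by (simp add: index_col_gram scalar_prod_def lessThan_atLeast0)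
  then show "col_gram X UNIV j0 d $$ (s, t) = 1\<^sub>m d $$ (s, t)"
    using st assms(2) unfolding X(3) by simp
qed auto

lemma transpose_col_gram_real:
  assumes "\<And>r c. r < dim_row X \<Longrightarrow> c < dim_col X \<Longrightarrow> X $$ (r, c) \<in> \<real>" "j0 + d \<le> dim_col X"
  shows "transpose_mat (col_gram X R j0 d) = col_gram X R j0 d"
proof (rule eq_matI)
  fix s t assume "s < dim_row (col_gram X R j0 d)" "t < dim_col (col_gram X R j0 d)"
  then have st: "s < d" "t < d" by auto
  have "cnj (X $$ (r, j0 + t)) * X $$ (r, j0 + s) = cnj (X $$ (r, j0 + s)) * X $$ (r, j0 + t)"
    if "r < dim_row X" for r
    using assms st that by (simp add: Reals_cnj_iff mult.commute)
  then show "transpose_mat (col_gram X R j0 d) $$ (s, t) = col_gram X R j0 d $$ (s, t)"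
    using st by (auto simp: index_col_gram intro!: sum.cong)
qed auto

lemma col_gram_single_row:
  assumes "r0 \<in> R" "r0 < dim_row X"
    and "\<And>r t. r < dim_row X \<Longrightarrow> r \<in> R \<Longrightarrow> r \<noteq> r0 \<Longrightarrow> t < d \<Longrightarrow> X $$ (r, j0 + t) = 0"
  shows "col_gram X R j0 d = mat d d (\<lambda>(s, t). cnj (X $$ (r0, j0 + s)) * X $$ (r0, j0 + t))"
proof (rule eq_matI)
  fix s t assume "s < dim_row (mat d d (\<lambda>(s, t). cnj (X $$ (r0, j0 + s)) * X $$ (r0, j0 + t)))"
    "t < dim_col (mat d d (\<lambda>(s, t). cnj (X $$ (r0, j0 + s)) * X $$ (r0, j0 + t)))"
  then have st: "s < d" "t < d" by auto
  have "col_gram X R j0 d $$ (s, t)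
      = (\<Sum>r<dim_row X. if r = r0 then cnj (X $$ (r0, j0 + s)) * X $$ (r0, j0 + t) else 0)"
    unfolding index_col_gram[OF st] using assms st by (intro sum.cong) auto
  then show "col_gram X R j0 d $$ (s, t)
      = mat d d (\<lambda>(s, t). cnj (X $$ (r0, j0 + s)) * X $$ (r0, j0 + t)) $$ (s, t)"
    using assms(2) st by simp
qed auto

lemma triple_prod_subset_unitary_group:
  assumes "sum_list ns = N" "sum_list hs = N"
  shows "triple_prod (block_unitary_group ns) (orthogonal_group N) (block_unitary_group hs)
           \<subseteq> unitary_group N"
  using assms block_unitary_group_subset[of ns] block_unitary_group_subset[of hs]
  unfolding triple_prod_def orthogonal_group_def by (auto intro!: unitary_group_mult)

lemma col_gram_block_unitary_left:
  assumes "l \<in> block_unitary_group ns" "sum_list ns = N" "X \<in> carrier_mat N N" "j0 + d \<le> N"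
  shows "col_gram (l * X) (block ns m) j0 d = col_gram X (block ns m) j0 d"
proof (rule col_gram_mult_left[OF _ assms(3,4)])
  show "l \<in> unitary_group N"
    using assms(1,2) block_unitary_group_subset by force
  show "l $$ (i, j) = 0 \<and> l $$ (j, i) = 0"
    if "i < N" "j < N" "i \<in> block ns m" "j \<notin> block ns m" for i j
    using block_unitary_group_off_block[OF assms(1), of i j m] that assms(2) by simp
qed

lemma col_gram_block_unitary_right:
  assumes "h \<in> block_unitary_group hs" "sum_list hs = N" "k < length hs" "Y \<in> carrier_mat N N"
  defines "A \<equiv> diag_block h (block_start hs k) (hs ! k)"
  shows "col_gram (Y * h) R (block_start hs k) (hs ! k)
           = ctrans A * col_gram Y R (block_start hs k) (hs ! k) * A"
  unfolding A_def
proof (rule col_gram_mult_right)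
  have "h \<in> unitary_group N"
    using assms(1,2) block_unitary_group_subset by force
  then show "h \<in> carrier_mat N N"
    by (rule unitary_groupD(1))
  show "block_start hs k + hs ! k \<le> N"
    using assms block_start_add_le_sum_list by blast
  show "h $$ (c, block_start hs k + t) = 0"
    if "c < N" "t < hs ! k" "c \<notin> {block_start hs k..<block_start hs k + hs ! k}" for c t
    using block_unitary_group_off_block(2)[OF assms(1), of "block_start hs k + t" c k] that assms(2,3)
      block_start_add_le_sum_list[OF assms(3)] block_eq_atLeastLessThan[OF assms(3)]
    by simp
qed (use assms in simp)

lemma diag_block_unitary_group:
  assumes "h \<in> block_unitary_group hs" "k < length hs"
  shows "diag_block h (block_start hs k) (hs ! k) \<in> unitary_group (hs ! k)"
proof -
  define N where "N = sum_list hs"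
  define j0 where "j0 = block_start hs k"
  define d where "d = hs ! k"
  define A where "A = diag_block h j0 d"
  have A: "A \<in> carrier_mat d d" "ctrans A \<in> carrier_mat d d"
    unfolding A_def by simp_all
  have h: "h \<in> unitary_group N"
    using assms(1) block_unitary_group_subset unfolding N_def by blast
  have one: "1\<^sub>m N \<in> unitary_group N"
    unfolding unitary_group_def by simp
  have cols: "j0 + d \<le> N"
    using block_start_add_le_sum_list[OF assms(2)] unfolding N_def j0_def d_def .
  have "col_gram (1\<^sub>m N * h) UNIV j0 d = ctrans A * col_gram (1\<^sub>m N) UNIV j0 d * A"
    unfolding A_def j0_def d_def
    by (rule col_gram_block_unitary_right[OF assms(1) N_def[symmetric] assms(2) one_carrier_mat])
  moreover have "1\<^sub>m N * h = h"
    by (rule left_mult_one_mat[OF unitary_groupD(1)[OF h]])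
  ultimately have "1\<^sub>m d = ctrans A * 1\<^sub>m d * A"
    using col_gram_unitary[OF h cols] col_gram_unitary[OF one cols] by simp
  then have "ctrans A * A = 1\<^sub>m d"
    unfolding right_mult_one_mat[OF A(2)] by simp
  then have "A * ctrans A = 1\<^sub>m d"
    by (rule mat_mult_left_right_inverse[OF A(2,1)])
  then show ?thesis
    using A(1) unfolding unitary_group_def A_def j0_def d_def by simp
qed

lemma col_gram_triple_prod_trace_symmetric:
  assumes g: "g \<in> triple_prod (block_unitary_group ns) (orthogonal_group N)
                                (block_unitary_group hs)"
    and sums: "sum_list ns = N" "sum_list hs = N" and k: "k < length hs"
  defines "G \<equiv> \<lambda>m. col_gram g (block ns m) (block_start hs k) (hs ! k)"
  shows "mat_trace (G m0 * G m1 * G m2) = mat_trace (G m0 * G m2 * G m1)"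
proof -
  define j0 where "j0 = block_start hs k"
  define d where "d = hs ! k"
  obtain l x h where g_eq: "g = l * x * h" and l: "l \<in> block_unitary_group ns"
    and x: "x \<in> orthogonal_group N" and h: "h \<in> block_unitary_group hs"
    using g unfolding triple_prod_def by blast
  have x_carrier: "x \<in> carrier_mat N N" and x_real: "\<And>i j. i < N \<Longrightarrow> j < N \<Longrightarrow> x $$ (i, j) \<in> \<real>"
    using x unfolding orthogonal_group_def unitary_group_def by auto
  have "l \<in> unitary_group N" "h \<in> unitary_group N"
    using l h sums block_unitary_group_subset by force+
  note carrier = this[THEN unitary_groupD(1)]
  have cols: "j0 + d \<le> N"
    using block_start_add_le_sum_list[OF k] sums(2) unfolding j0_def d_def by simp
  define A where "A = diag_block h j0 d"
  have A: "A \<in> unitary_group d"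
    using diag_block_unitary_group[OF h k] unfolding A_def j0_def d_def .
  define Gx where "Gx = (\<lambda>m. col_gram x (block ns m) j0 d)"
  have Gx: "Gx m \<in> carrier_mat d d" "transpose_mat (Gx m) = Gx m" for m
    unfolding Gx_def by (simp, rule transpose_col_gram_real) (use x_real x_carrier cols in auto)
  have G: "G m = ctrans A * Gx m * A" for m
  proof -
    have "g = l * (x * h)"
      unfolding g_eq by (rule assoc_mult_mat[OF carrier(1) x_carrier carrier(2)])
    then have "G m = col_gram (x * h) (block ns m) j0 d"
      unfolding G_def j0_def[symmetric] d_def[symmetric]
      using col_gram_block_unitary_left[OF l sums(1) mult_carrier_mat[OF x_carrier carrier(2)] cols]
      by simp
    then show ?thesis
      using col_gram_block_unitary_right[OF h sums(2) k x_carrier]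
      unfolding Gx_def A_def j0_def d_def by simp
  qed
  have "ctrans A \<in> carrier_mat d d"
    using unitary_groupD(1)[OF A] by simp
  then have conj: "mat_trace (G a * G b * G c) = mat_trace (Gx a * Gx b * Gx c)" for a b c
    unfolding G by (rule mat_trace_conj_triple[OF Gx(1) Gx(1) Gx(1) _ unitary_groupD(1,2)[OF A]])
  show ?thesis
    unfolding conj by (rule mat_trace_mult_symmetric_swap[OF Gx(1) Gx(1) Gx(1) Gx(2) Gx(2) Gx(2)])
qed

section \<open>A unitary matrix breaking the trace symmetry\<close>

lemma obtain_bij_betw_onto_prefix:
  fixes f :: "nat \<Rightarrow> nat"
  assumes inj: "inj_on f {..<k}" and range: "f ` {..<k} \<subseteq> {..<n}"
  obtains \<sigma> where "bij_betw \<sigma> {..<n} {..<n}" "\<And>i. i < k \<Longrightarrow> \<sigma> (f i) = i"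
proof -
  let ?A = "f ` {..<k}"
  have "k \<le> n"
    using card_inj_on_le[OF inj range finite_lessThan] by simp
  have "card ({..<n} - ?A) = card {k..<n}"
    using range inj by (simp add: card_Diff_subset card_image)
  then obtain \<tau> where \<tau>: "bij_betw \<tau> ({..<n} - ?A) {k..<n}"
    by (metis finite_same_card_bij finite_Diff finite_lessThan finite_atLeastLessThan)
  have inv: "bij_betw (inv_into {..<k} f) ?A {..<k}"
    using inj by (simp add: bij_betw_inv_into inj_on_imp_bij_betw)
  define \<sigma> where "\<sigma> x = (if x \<in> ?A then inv_into {..<k} f x else \<tau> x)" for x
  have "bij_betw \<sigma> ?A {..<k}"
    using bij_betw_cong[of ?A \<sigma> "inv_into {..<k} f"] inv by (simp add: \<sigma>_def)
  moreover have "bij_betw \<sigma> ({..<n} - ?A) {k..<n}"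
    using bij_betw_cong[of "{..<n} - ?A" \<sigma> \<tau>] \<tau> by (simp add: \<sigma>_def)
  ultimately have "bij_betw \<sigma> (?A \<union> ({..<n} - ?A)) ({..<k} \<union> {k..<n})"
    by (rule bij_betw_combine) auto
  moreover have "?A \<union> ({..<n} - ?A) = {..<n}" "{..<k} \<union> {k..<n} = {..<n}"
    using range \<open>k \<le> n\<close> by auto
  moreover have "\<sigma> (f i) = i" if "i < k" for i
    using inj that by (simp add: \<sigma>_def)
  ultimately show ?thesis
    using that by simp
qed

lemma unitary_group_permute:
  fixes W :: "nat \<Rightarrow> nat \<Rightarrow> complex"
  assumes W: "\<And>x x'. x < n \<Longrightarrow> x' < n \<Longrightarrow> (\<Sum>y<n. W x y * cnj (W x' y)) = (if x = x' then 1 else 0)"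
    and \<alpha>: "bij_betw \<alpha> {..<n} {..<n}" and \<beta>: "bij_betw \<beta> {..<n} {..<n}"
  shows "mat n n (\<lambda>(r, c). W (\<alpha> r) (\<beta> c)) \<in> unitary_group n"
proof -
  let ?g = "mat n n (\<lambda>(r, c). W (\<alpha> r) (\<beta> c))"
  show ?thesis
  proof (rule unitary_groupI_rows)
    fix r r' assume r: "r < n" "r' < n"
    have "\<alpha> r < n" "\<alpha> r' < n"
      using \<alpha> r by (auto simp: bij_betw_def)
    have "(\<Sum>c<n. W (\<alpha> r) (\<beta> c) * cnj (W (\<alpha> r') (\<beta> c)))
        = (\<Sum>y<n. W (\<alpha> r) y * cnj (W (\<alpha> r') y))"
      by (rule sum.reindex_bij_betw[OF \<beta>])
    also have "\<dots> = (if r = r' then 1 else 0)"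
      using W[OF \<open>\<alpha> r < n\<close> \<open>\<alpha> r' < n\<close>] \<alpha> r by (auto simp: bij_betw_def inj_on_def)
    finally show "(\<Sum>c<n. ?g $$ (r, c) * cnj (?g $$ (r', c))) = (if r = r' then 1 else 0)"
      using r by simp
  qed simp
qed

definition pad_identity :: "nat \<Rightarrow> (nat \<Rightarrow> nat \<Rightarrow> complex) \<Rightarrow> nat \<Rightarrow> nat \<Rightarrow> complex" where
  "pad_identity k W x y = (if x < k \<and> y < k then W x y else if x = y then 1 else 0)"

lemma pad_identity_rows_orthonormal:
  assumes W: "\<And>x x'. x < k \<Longrightarrow> x' < k \<Longrightarrow> (\<Sum>y<k. W x y * cnj (W x' y)) = (if x = x' then 1 else 0)"
    and "k \<le> n" "x < n" "x' < n"
  shows "(\<Sum>y<n. pad_identity k W x y * cnj (pad_identity k W x' y)) = (if x = x' then 1 else 0)"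
proof (cases "x < k \<and> x' < k")
  case True
  have "(\<Sum>y<n. pad_identity k W x y * cnj (pad_identity k W x' y)) = (\<Sum>y<k. W x y * cnj (W x' y))"
    using assms True by (intro sum.mono_neutral_cong_right) (auto simp: pad_identity_def)
  then show ?thesis
    using W True by simp
next
  case False
  then consider "k \<le> x" | "k \<le> x'"
    by linarith
  then show ?thesis
  proof cases
    case 1
    have "(\<Sum>y<n. pad_identity k W x y * cnj (pad_identity k W x' y)) = cnj (pad_identity k W x' x)"
      using 1 assms by (simp add: pad_identity_def if_distrib[where f = "\<lambda>a. a * _"] cong: if_cong)
    then show ?thesis
      using 1 by (auto simp: pad_identity_def)
  next
    case 2
    have "(\<Sum>y<n. pad_identity k W x y * cnj (pad_identity k W x' y)) = pad_identity k W x x'"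
      using 2 assms by (simp add: pad_identity_def if_distrib[where f = "\<lambda>a. _ * cnj a"] cong: if_cong)
    then show ?thesis
      using 2 by (auto simp: pad_identity_def)
  qed
qed

lemma obtain_unitary_embedding:
  fixes W :: "nat \<Rightarrow> nat \<Rightarrow> complex" and b :: "nat \<Rightarrow> nat"
  assumes W: "\<And>x x'. x < k \<Longrightarrow> x' < k \<Longrightarrow> (\<Sum>y<k. W x y * cnj (W x' y)) = (if x = x' then 1 else 0)"
    and b_inj: "inj_on b {..<k}" and b_range: "b ` {..<k} \<subseteq> {..<N}"
    and cols: "j0 + d \<le> N" "d \<le> k"
  obtains g where "g \<in> unitary_group N"
    "\<And>i t. i < k \<Longrightarrow> t < d \<Longrightarrow> g $$ (b i, j0 + t) = W i t"
    "\<And>r t. r < N \<Longrightarrow> r \<notin> b ` {..<k} \<Longrightarrow> t < d \<Longrightarrow> g $$ (r, j0 + t) = 0"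
proof -
  obtain \<alpha> where \<alpha>: "bij_betw \<alpha> {..<N} {..<N}" "\<And>i. i < k \<Longrightarrow> \<alpha> (b i) = i"
    using obtain_bij_betw_onto_prefix[OF b_inj b_range] by blast
  have "inj_on (\<lambda>t. j0 + t) {..<d}" "(\<lambda>t. j0 + t) ` {..<d} \<subseteq> {..<N}"
    using cols by auto
  then obtain \<beta> where \<beta>: "bij_betw \<beta> {..<N} {..<N}" "\<And>t. t < d \<Longrightarrow> \<beta> (j0 + t) = t"
    using obtain_bij_betw_onto_prefix by blast
  define g where "g = mat N N (\<lambda>(r, c). pad_identity k W (\<alpha> r) (\<beta> c))"
  have "k \<le> N"
    using card_inj_on_le[OF b_inj b_range finite_lessThan] by simp
  then have "g \<in> unitary_group N"
    unfolding g_def by (intro unitary_group_permute \<alpha>(1) \<beta>(1) pad_identity_rows_orthonormal W)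
  moreover have "g $$ (b i, j0 + t) = W i t" if "i < k" "t < d" for i t
    using that cols b_range \<alpha>(2) \<beta>(2) unfolding g_def pad_identity_def by auto
  moreover have "g $$ (r, j0 + t) = 0" if r: "r < N" "r \<notin> b ` {..<k}" and t: "t < d" for r t
  proof -
    have "k \<le> \<alpha> r"
    proof (rule ccontr)
      assume "\<not> k \<le> \<alpha> r"
      then have "\<alpha> (b (\<alpha> r)) = \<alpha> r" "b (\<alpha> r) < N"
        using \<alpha>(2) b_range by (auto simp: image_subset_iff)
      then have "b (\<alpha> r) = r"
        using \<alpha>(1) r(1) by (auto simp: bij_betw_def inj_on_def)
      then show False
        using r(2) \<open>\<not> k \<le> \<alpha> r\<close> by (metis imageI lessThan_iff not_le)
    qed
    then show ?thesis
      using r t cols \<beta>(2) unfolding g_def pad_identity_def by auto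
  qed
  ultimately show ?thesis
    using that by blast
qed

(* Restricted to the first two columns, rows 0, 1, 2 are (1, 0)/2, (1, 1)/2, (1, i)/2; the
   cyclic product of their pairwise inner products is not real. *)
definition witness_unitary :: "nat \<Rightarrow> nat \<Rightarrow> complex" where
  "witness_unitary x y =
     [[1, 0, -(1 + \<i>), 1], [1, 1, \<i>, \<i>], [1, \<i>, 1, -\<i>], [-1, 1 + \<i>, 0, 1]] ! x ! y / 2"

lemma witness_unitary_rows_orthonormal:
  "x < 4 \<Longrightarrow> x' < 4 \<Longrightarrow>
    (\<Sum>y<4. witness_unitary x y * cnj (witness_unitary x' y)) = (if x = x' then 1 else 0)"
  by (auto simp: less_Suc_eq numeral_eq_Suc witness_unitary_def complex_eq_iff field_simps)

lemma witness_unitary_rank_one_trace_ne: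
  defines "E \<equiv> \<lambda>m. mat 2 2 (\<lambda>(s, t). cnj (witness_unitary m s) * witness_unitary m t)"
  shows "mat_trace (E 0 * E 1 * E 2) \<noteq> mat_trace (E 0 * E 2 * E 1)"
  unfolding E_def
  by (simp add: mat_trace_def scalar_prod_def numeral_eq_Suc witness_unitary_def complex_eq_iff)

lemma obtain_unitary_col_gram_trace_ne:
  assumes pos: "\<forall>m\<in>set ns. m > 0" and len: "length ns \<ge> 4" and cols: "j0 + 2 \<le> sum_list ns"
  obtains g where "g \<in> unitary_group (sum_list ns)"
    "mat_trace (col_gram g (block ns 0) j0 2 * col_gram g (block ns 1) j0 2
                * col_gram g (block ns 2) j0 2)
     \<noteq> mat_trace (col_gram g (block ns 0) j0 2 * col_gram g (block ns 2) j0 2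
                  * col_gram g (block ns 1) j0 2)"
proof -
  define b where "b = block_start ns"
  have b_block: "b i \<in> block ns i" if "i < 4" for i
    unfolding b_def using that len pos by (intro block_start_in_block) auto
  have b_inj: "inj_on b {..<4}"
    using b_block block_unique by (metis inj_onI lessThan_iff)
  have b_range: "b ` {..<4} \<subseteq> {..<sum_list ns}"
    using b_block block_subset[of ns] by fastforce
  obtain g where g: "g \<in> unitary_group (sum_list ns)"
    and g_rows: "\<And>i t. i < 4 \<Longrightarrow> t < 2 \<Longrightarrow> g $$ (b i, j0 + t) = witness_unitary i t"
    and g_zero: "\<And>r t. r < sum_list ns \<Longrightarrow> r \<notin> b ` {..<4} \<Longrightarrow> t < 2 \<Longrightarrow> g $$ (r, j0 + t) = 0"
    using obtain_unitary_embedding[OF witness_unitary_rows_orthonormal b_inj b_range cols]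
    by (simp, blast)
  have "col_gram g (block ns m) j0 2 = mat 2 2 (\<lambda>(s, t). cnj (witness_unitary m s) * witness_unitary m t)"
    if "m < 3" for m
  proof -
    have "r \<notin> b ` {..<4}" if r: "r \<in> block ns m" "r \<noteq> b m" for r
    proof
      assume "r \<in> b ` {..<4}"
      then obtain i where "i < 4" "r = b i"
        by blast
      then have "i = m"
        using block_unique[of r ns i m] b_block r(1) by simp
      then show False
        using r(2) \<open>r = b i\<close> by simp
    qed
    moreover have "dim_row g = sum_list ns"
      using unitary_groupD(1)[OF g] by simp
    ultimately have "col_gram g (block ns m) j0 2
        = mat 2 2 (\<lambda>(s, t). cnj (g $$ (b m, j0 + s)) * g $$ (b m, j0 + t))"
      using g_zero b_block[of m] block_subset[of ns m] \<open>m < 3\<close> by (intro col_gram_single_row) auto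
    then show ?thesis
      using g_rows \<open>m < 3\<close> by (auto intro!: eq_matI)
  qed
  then show ?thesis
    using that g witness_unitary_rank_one_trace_ne by simp
qed

theorem proposition6p6:
  fixes ns :: "nat list" and p q :: nat
  assumes "\<forall>m\<in>set ns. m > 0"
    and "p > 0" and "q > 0"
    and "sum_list ns = p + q"
    and "min p q = 2"
    and "length ns \<ge> 4"
  shows "triple_prod (block_unitary_group ns) (orthogonal_group (p + q)) (block_unitary_group [p, q])
           \<subset> unitary_group (p + q)"
proof -
  obtain k where k: "k < length [p, q]" "[p, q] ! k = 2"
    using assms(5) that[of 0] that[of 1] by (auto simp: min_def split: if_splits)
  have "block_start [p, q] k + 2 \<le> sum_list ns"
    using block_start_add_le_sum_list[OF k(1)] k(2) assms(4) by simp
  then obtain g where g: "g \<in> unitary_group (p + q)"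
    and asymmetric: "mat_trace (col_gram g (block ns 0) (block_start [p, q] k) 2
                                * col_gram g (block ns 1) (block_start [p, q] k) 2
                                * col_gram g (block ns 2) (block_start [p, q] k) 2)
                   \<noteq> mat_trace (col_gram g (block ns 0) (block_start [p, q] k) 2
                                * col_gram g (block ns 2) (block_start [p, q] k) 2
                                * col_gram g (block ns 1) (block_start [p, q] k) 2)"
    using obtain_unitary_col_gram_trace_ne[OF assms(1,6)] assms(4) by metis
  let ?LGH =
    "triple_prod (block_unitary_group ns) (orthogonal_group (p + q)) (block_unitary_group [p, q])"
  have "g \<notin> ?LGH"
    using col_gram_triple_prod_trace_symmetric[of g ns "p + q" "[p, q]" k 0 1 2] asymmetric k assms(4)
    by auto
  moreover have "?LGH \<subseteq> unitary_group (p + q)"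
    using assms(4) by (intro triple_prod_subset_unitary_group) simp_all
  ultimately show ?thesis
    using g by blast
qed

end
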